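(* Let $\mathcal{P}$ be a finite set of passwords, $R_1,\dots,R_m\subseteq\mathcal{P}$ positive rules, and $\ell_1,\dots,\ell_n$ rankings of $\mathcal{P}$. Consider IterativeElimination: set $S_0=[m]$, $i=0$; while $S_i\neq\emptyset$, let $w(S_i)$ be a password maximizing $\Pr[w\mid\mathcal{A}_{S_i}]$ over $w\in\mathcal{A}_{S_i}$, set $S_{i+1}=S_i\setminus\{j : w(S_i)\in R_j\}$ and increase $i$; finally return $S_{i^*}$ where $i^*$ minimizes $p(1,\mathcal{A}_{S_i})$ over the nonempty sets $S_i$ produced. Then the returned set $S$ satisfies $p(1,\mathcal{A}_S)\le p(1,\mathcal{A}_{S'})$ for every $S'\subseteq[m]$ (with $\mathcal{A}_{S'}\ne\emptyset$).
   Context: Positive rules setting: for $S\subseteq[m]$, the policy is $\mathcal{A}_S=\bigcup_{i\in S}R_i$. Ranking model: user $i$, under policy $\mathcal{A}$, chooses the most preferred (according to $\ell_i$) password in $\mathcal{A}$; $\Pr[w\mid\mathcal{A}]=\frac1n|\{i: \text{user } i\text{ chooses } w\}|$. $p(1,\mathcal{A})=\max_{w\in\mathcal{A}}\Pr[w\mid\mathcal{A}]$, the probability of the most popular allowed password. *)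

theory Defs
  imports Complex_Main
begin

text \<open>Users are indexed by {1..n}; user i has ranking l i, a bijection from P onto
{1..card P}, rank 1 being the most preferred password.\<close>

definition is_ranking :: "'p set \<Rightarrow> ('p \<Rightarrow> nat) \<Rightarrow> bool" where
  "is_ranking P r \<longleftrightarrow> bij_betw r P {1..card P}"

definition policy :: "(nat \<Rightarrow> 'p set) \<Rightarrow> nat set \<Rightarrow> 'p set" where
  "policy R S = (\<Union>j\<in>S. R j)"

definition choice :: "('p \<Rightarrow> nat) \<Rightarrow> 'p set \<Rightarrow> 'p" where
  "choice r A = (THE w. w \<in> A \<and> (\<forall>v\<in>A. r w \<le> r v))"

definition Pr :: "nat \<Rightarrow> (nat \<Rightarrow> 'p \<Rightarrow> nat) \<Rightarrow> 'p \<Rightarrow> 'p set \<Rightarrow> real" where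
  "Pr n l w A = real (card {i\<in>{1..n}. choice (l i) A = w}) / real n"

definition p1 :: "nat \<Rightarrow> (nat \<Rightarrow> 'p \<Rightarrow> nat) \<Rightarrow> 'p set \<Rightarrow> real" where
  "p1 n l A = Max ((\<lambda>w. Pr n l w A) ` A)"

text \<open>Ties (in the choice of w i) may be broken arbitrarily.\<close>
definition IE_run :: "nat \<Rightarrow> (nat \<Rightarrow> 'p \<Rightarrow> nat) \<Rightarrow> nat \<Rightarrow> (nat \<Rightarrow> 'p set)
    \<Rightarrow> (nat \<Rightarrow> nat set) \<Rightarrow> (nat \<Rightarrow> 'p) \<Rightarrow> nat \<Rightarrow> bool" where
  "IE_run n l m R S w k \<longleftrightarrow>
     S 0 = {1..m} \<and> S k = {} \<and>
     (\<forall>i<k. S i \<noteq> {} \<and>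
        w i \<in> policy R (S i) \<and>
        (\<forall>v\<in>policy R (S i). Pr n l v (policy R (S i)) \<le> Pr n l (w i) (policy R (S i))) \<and>
        S (Suc i) = S i - {j. w i \<in> R j})"

definition IE_output :: "nat \<Rightarrow> (nat \<Rightarrow> 'p \<Rightarrow> nat) \<Rightarrow> nat \<Rightarrow> (nat \<Rightarrow> 'p set)
    \<Rightarrow> nat set \<Rightarrow> bool" where
  "IE_output n l m R T \<longleftrightarrow>
     (\<exists>S w k istar. IE_run n l m R S w k \<and> istar < k \<and>
        (\<forall>i<k. p1 n l (policy R (S istar)) \<le> p1 n l (policy R (S i))) \<and>
        T = S istar)"

end

theory Submission
  imports Defs
begin

text \<open>Since the run starts at \<open>[m]\<close>
and ends at \<open>{}\<close>, some step \<open>i\<close> is the first to remove a rule of \<open>S'\<close>: then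
\<open>S' \<subseteq> S i\<close> and the eliminated password \<open>w i\<close> lies in \<open>A(S')\<close>. Shrinking the policy
from \<open>A(S i)\<close> to \<open>A(S') \<subseteq> A(S i)\<close> keeps every user who chose \<open>w i\<close> on it, so
\<open>p1(A(S')) \<ge> Pr[w i | A(S')] \<ge> Pr[w i | A(S i)] = p1(A(S i)) \<ge> p1(A(T))\<close>.\<close>

lemma choice_eqI:
  assumes "inj_on r A" "w \<in> A" "\<forall>v\<in>A. r w \<le> r v"
  shows "choice r A = w"
  unfolding choice_def
proof (rule the_equality)
  show "w \<in> A \<and> (\<forall>v\<in>A. r w \<le> r v)" using assms(2,3) by blast
  fix x assume "x \<in> A \<and> (\<forall>v\<in>A. r x \<le> r v)"
  then show "x = w" using assms by (meson antisym inj_onD)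
qed

lemma choice_minimal:
  assumes "finite A" "A \<noteq> {}" "inj_on r A"
  shows "choice r A \<in> A \<and> (\<forall>v\<in>A. r (choice r A) \<le> r v)"
proof -
  have "Min (r ` A) \<in> r ` A" using assms(1,2) by (intro Min_in) auto
  then obtain w where "w \<in> A" "r w = Min (r ` A)" by auto
  moreover have "\<forall>v\<in>A. Min (r ` A) \<le> r v" using assms(1) by simp
  ultimately show ?thesis using choice_eqI[OF assms(3)] by auto
qed

lemma choice_subset:
  assumes "finite A" "inj_on r A" "B \<subseteq> A" "choice r A \<in> B"
  shows "choice r B = choice r A"
proof -
  have "\<forall>v\<in>A. r (choice r A) \<le> r v"
    using choice_minimal[OF assms(1) _ assms(2)] assms(3,4) by blast
  then show ?thesis
    using choice_eqI[OF inj_on_subset[OF assms(2,3)] assms(4)] assms(3) by blast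
qed

lemma Pr_mono_subset:
  assumes "finite A" "\<forall>i\<in>{1..n}. inj_on (l i) A" "B \<subseteq> A" "w \<in> B"
  shows "Pr n l w A \<le> Pr n l w B"
proof -
  have "{i\<in>{1..n}. choice (l i) A = w} \<subseteq> {i\<in>{1..n}. choice (l i) B = w}"
    using choice_subset[OF assms(1) _ assms(3)] assms(2,4) by auto
  then show ?thesis
    unfolding Pr_def by (intro divide_right_mono) (auto intro: card_mono)
qed

lemma Pr_le_p1:
  assumes "finite A" "w \<in> A"
  shows "Pr n l w A \<le> p1 n l A"
  unfolding p1_def using assms by (intro Max_ge) auto

lemma p1_eq_Pr_max:
  assumes "finite A" "w \<in> A" "\<forall>v\<in>A. Pr n l v A \<le> Pr n l w A"
  shows "p1 n l A = Pr n l w A"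
  unfolding p1_def using assms by (intro Max_eqI) auto

lemma p1_le_subpolicy:
  assumes "finite A" "\<forall>i\<in>{1..n}. inj_on (l i) A"
    and "w \<in> A" "\<forall>v\<in>A. Pr n l v A \<le> Pr n l w A"
    and "B \<subseteq> A" "w \<in> B"
  shows "p1 n l A \<le> p1 n l B"
proof -
  have "p1 n l A = Pr n l w A" using p1_eq_Pr_max assms(1,3,4) .
  also have "\<dots> \<le> Pr n l w B" using Pr_mono_subset assms(1,2,5,6) .
  also have "\<dots> \<le> p1 n l B" using Pr_le_p1 finite_subset[OF assms(5,1)] assms(6) .
  finally show ?thesis .
qed

lemma policy_mono: "S \<subseteq> S' \<Longrightarrow> policy R S \<subseteq> policy R S'"
  unfolding policy_def by blast

lemma IE_run_subset_initial:
  assumes "IE_run n l m R S w k" "i \<le> k"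
  shows "S i \<subseteq> {1..m}"
  using assms(2)
proof (induction i)
  case 0 then show ?case using assms(1) unfolding IE_run_def by simp
next
  case (Suc i) then show ?case using assms(1) unfolding IE_run_def by auto
qed

lemma IE_run_first_hit:
  assumes "IE_run n l m R S w k" "S' \<subseteq> {1..m}" "policy R S' \<noteq> {}"
  obtains i where "i < k" "S' \<subseteq> S i" "w i \<in> policy R S'"
proof -
  note run = assms(1)[unfolded IE_run_def]
  have "\<exists>i<k. S' \<subseteq> S i \<and> \<not> S' \<subseteq> S (Suc i)"
  proof (rule ccontr)
    assume never: "\<not> ?thesis"
    have "i \<le> k \<Longrightarrow> S' \<subseteq> S i" for i
      by (induction i) (use run assms(2) never in auto)
    then show False using run assms(3) unfolding policy_def by auto
  qed
  then obtain i where "i < k" "S' \<subseteq> S i" "\<not> S' \<subseteq> S (Suc i)" by blast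
  moreover from this have "w i \<in> policy R S'"
    using run unfolding policy_def by auto
  ultimately show ?thesis using that by blast
qed

theorem theorem3p3:
  fixes P :: "'p set" and R :: "nat \<Rightarrow> 'p set" and l :: "nat \<Rightarrow> 'p \<Rightarrow> nat"
    and m n :: nat and T :: "nat set"
  assumes "finite P"
    and "\<forall>j\<in>{1..m}. R j \<subseteq> P"
    and "\<forall>i\<in>{1..n}. is_ranking P (l i)"
    and "IE_output n l m R T"
  shows "\<forall>S'. S' \<subseteq> {1..m} \<and> policy R S' \<noteq> {} \<longrightarrow>
           p1 n l (policy R T) \<le> p1 n l (policy R S')"
proof (intro allI impI)
  fix S' assume S': "S' \<subseteq> {1..m} \<and> policy R S' \<noteq> {}"
  obtain S w k istar where run: "IE_run n l m R S w k" and "istar < k"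
    and best: "\<forall>i<k. p1 n l (policy R T) \<le> p1 n l (policy R (S i))"
    using assms(4) unfolding IE_output_def by blast
  obtain i where i: "i < k" "S' \<subseteq> S i" "w i \<in> policy R S'"
    using IE_run_first_hit[OF run] S' by blast
  have AP: "policy R (S i) \<subseteq> P"
    using IE_run_subset_initial[OF run, of i] i(1) assms(2) unfolding policy_def by force
  have "p1 n l (policy R (S i)) \<le> p1 n l (policy R S')"
  proof (rule p1_le_subpolicy[OF _ _ _ _ policy_mono[OF i(2)] i(3)])
    show "finite (policy R (S i))" using AP assms(1) finite_subset by blast
    show "\<forall>u\<in>{1..n}. inj_on (l u) (policy R (S i))"
      using assms(3) AP unfolding is_ranking_def bij_betw_def by (meson inj_on_subset)
    show "w i \<in> policy R (S i)"
      and "\<forall>v\<in>policy R (S i). Pr n l v (policy R (S i)) \<le> Pr n l (w i) (policy R (S i))"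
      using run i(1) unfolding IE_run_def by auto
  qed
  then show "p1 n l (policy R T) \<le> p1 n l (policy R S')" using best i(1) by force
qed

end
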